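(* For every integer $n\geq 1$, $$c_n(231,213 : 231)=c_n(312,132 : 312)=\begin{cases}k^2+1 & \text{if } n=2k,\\ k^2+k+1 & \text{if } n=2k+1.\end{cases}$$
   Context: $S_n$ is the symmetric group on $[n]=\{1,\dots,n\}$, and a permutation $\pi\in S_n$ is written in one-line notation $\pi=\pi_1\pi_2\cdots\pi_n$ with $\pi_i=\pi(i)$. For $\tau\in S_k$, $k\le n$, $\pi$ contains $\tau$ if there are indices $i_1<\dots<i_k$ with $\pi_{i_s}>\pi_{i_t}$ iff $\tau_s>\tau_t$ for all $1\le s<t\le k$; otherwise $\pi$ avoids $\tau$. $\pi^2$ denotes the composition $\pi\circ\pi$. For patterns $\sigma_1,\sigma_2,\rho$, $c_n(\sigma_1,\sigma_2 : \rho)$ denotes the number of permutations $\pi\in S_n$ such that $\pi$ avoids both $\sigma_1$ and $\sigma_2$ and $\pi^2$ avoids $\rho$. *)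

theory Defs
  imports "HOL-Combinatorics.Permutations"
begin

text \<open>A permutation of [n] = {1..n} is a function nat => nat that permutes {1..n}
  (identity outside).
  A pattern tau in S_k is given by its one-line notation as a list
  [tau_1, ..., tau_k].\<close>

definition contains :: "(nat \<Rightarrow> nat) \<Rightarrow> nat \<Rightarrow> nat list \<Rightarrow> bool" where
  "contains \<pi> n \<tau> \<longleftrightarrow>
     (\<exists>idx :: nat \<Rightarrow> nat.
        (\<forall>s t. s < t \<and> t < length \<tau> \<longrightarrow> idx s < idx t) \<and>
        (\<forall>s < length \<tau>. 1 \<le> idx s \<and> idx s \<le> n) \<and>
        (\<forall>s t. s < t \<and> t < length \<tau> \<longrightarrow>
              (\<pi> (idx s) > \<pi> (idx t) \<longleftrightarrow> \<tau> ! s > \<tau> ! t)))"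

definition avoids :: "(nat \<Rightarrow> nat) \<Rightarrow> nat \<Rightarrow> nat list \<Rightarrow> bool" where
  "avoids \<pi> n \<tau> \<longleftrightarrow> \<not> contains \<pi> n \<tau>"

definition c :: "nat \<Rightarrow> nat list \<Rightarrow> nat list \<Rightarrow> nat list \<Rightarrow> nat" where
  "c n \<sigma>1 \<sigma>2 \<rho> = card {\<pi>. \<pi> permutes {1..n} \<and> avoids \<pi> n \<sigma>1 \<and> avoids \<pi> n \<sigma>2
                               \<and> avoids (\<pi> \<circ> \<pi>) n \<rho>}"

end

theory Submission
  imports Defs
begin

(* Avoiding 231 and 213 means that every entry of pi lies either below or above all entries to
   its right, so pi(1) is 1 or n.  If pi(1) = 1, then pi = 1 (+) sigma for a permutation sigma of
   the same kind on n - 1 letters, and this decomposition commutes with squaring.  If pi(1) = n,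
   let pi begin with the longest run n, n - 1, ..., n + 1 - b; the next entry is then 1.
   Avoidance of 231 in pi^2 forces r = n - b <= b, and then pi^2 reads the last r entries
   backwards on the positions 1..r, so that they must increase.  Hence
   pi = n (n-1) ... (r+1) 1 2 ... r with 1 <= r <= n/2, giving the recursion
   c(n) = c(n-1) + floor(n/2) with c(1) = 1.  The second class is the image of the first under
   reverse-complement, i.e. conjugation by i -> n + 1 - i, which turns 231 into 312 and 213
   into 132 and commutes with squaring. *)

definition has231 :: "(nat \<Rightarrow> nat) \<Rightarrow> nat \<Rightarrow> bool" where
  "has231 f n \<longleftrightarrow> (\<exists>p q s. 1 \<le> p \<and> p < q \<and> q < s \<and> s \<le> n \<and> f s < f p \<and> f p < f q)"

definition has213 :: "(nat \<Rightarrow> nat) \<Rightarrow> nat \<Rightarrow> bool" where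
  "has213 f n \<longleftrightarrow> (\<exists>p q s. 1 \<le> p \<and> p < q \<and> q < s \<and> s \<le> n \<and> f q < f p \<and> f p < f s)"

definition has312 :: "(nat \<Rightarrow> nat) \<Rightarrow> nat \<Rightarrow> bool" where
  "has312 f n \<longleftrightarrow> (\<exists>p q s. 1 \<le> p \<and> p < q \<and> q < s \<and> s \<le> n \<and> f q < f s \<and> f s < f p)"

definition has132 :: "(nat \<Rightarrow> nat) \<Rightarrow> nat \<Rightarrow> bool" where
  "has132 f n \<longleftrightarrow> (\<exists>p q s. 1 \<le> p \<and> p < q \<and> q < s \<and> s \<le> n \<and> f p < f s \<and> f s < f q)"

lemma has231I:
  "1 \<le> p \<Longrightarrow> p < q \<Longrightarrow> q < s \<Longrightarrow> s \<le> n \<Longrightarrow> f s < f p \<Longrightarrow> f p < f q \<Longrightarrow> has231 f n"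
  unfolding has231_def by blast

lemma contains_length3_iff:
  "contains f n [x, y, z] \<longleftrightarrow> (\<exists>p q s. 1 \<le> p \<and> p < q \<and> q < s \<and> s \<le> n \<and>
     (f p > f q \<longleftrightarrow> x > y) \<and> (f p > f s \<longleftrightarrow> x > z) \<and> (f q > f s \<longleftrightarrow> y > z))"
proof
  assume "contains f n [x, y, z]"
  then obtain idx where mono: "\<forall>s t. s < t \<and> t < length [x, y, z] \<longrightarrow> idx s < idx t"
    and range: "\<forall>s < length [x, y, z]. 1 \<le> idx s \<and> idx s \<le> n"
    and order: "\<forall>s t. s < t \<and> t < length [x, y, z] \<longrightarrow>
                  (f (idx s) > f (idx t) \<longleftrightarrow> [x, y, z] ! s > [x, y, z] ! t)"
    unfolding contains_def by blast
  show "\<exists>p q s. 1 \<le> p \<and> p < q \<and> q < s \<and> s \<le> n \<and>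
      (f p > f q \<longleftrightarrow> x > y) \<and> (f p > f s \<longleftrightarrow> x > z) \<and> (f q > f s \<longleftrightarrow> y > z)"
    apply (rule exI[of _ "idx 0"], rule exI[of _ "idx 1"], rule exI[of _ "idx 2"])
    using mono[rule_format, of 0 1] mono[rule_format, of 1 2] range[rule_format, of 0]
      range[rule_format, of 2] order[rule_format, of 0 1] order[rule_format, of 0 2]
      order[rule_format, of 1 2]
    by simp
next
  assume "\<exists>p q s. 1 \<le> p \<and> p < q \<and> q < s \<and> s \<le> n \<and>
      (f p > f q \<longleftrightarrow> x > y) \<and> (f p > f s \<longleftrightarrow> x > z) \<and> (f q > f s \<longleftrightarrow> y > z)"
  then obtain p q s where triple: "1 \<le> p" "p < q" "q < s" "s \<le> n"
    "f p > f q \<longleftrightarrow> x > y" "f p > f s \<longleftrightarrow> x > z" "f q > f s \<longleftrightarrow> y > z"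
    by blast
  show "contains f n [x, y, z]"
    unfolding contains_def
    apply (rule exI[of _ "\<lambda>k. if k = 0 then p else if k = 1 then q else s"])
    using triple by (auto simp: less_Suc_eq nth_Cons')
qed

lemma contains_length3_inj_iff:
  assumes "inj_on f {1..n}"
  shows "contains f n [x, y, z] \<longleftrightarrow> (\<exists>p q s. 1 \<le> p \<and> p < q \<and> q < s \<and> s \<le> n \<and>
     f p \<noteq> f q \<and> f p \<noteq> f s \<and> f q \<noteq> f s \<and>
     (f p > f q \<longleftrightarrow> x > y) \<and> (f p > f s \<longleftrightarrow> x > z) \<and> (f q > f s \<longleftrightarrow> y > z))"
proof -
  have "f p \<noteq> f q \<and> f p \<noteq> f s \<and> f q \<noteq> f s"
    if "1 \<le> p" "p < q" "q < s" "s \<le> n" for p q s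
    using inj_onD[OF assms, of p q] inj_onD[OF assms, of p s] inj_onD[OF assms, of q s] that
    by auto
  then show ?thesis
    unfolding contains_length3_iff by (intro ex_cong1) blast
qed

context
  fixes f :: "nat \<Rightarrow> nat" and n :: nat
  assumes inj: "inj_on f {1..n}"
begin

lemma contains_231_iff: "contains f n [2, 3, 1] \<longleftrightarrow> has231 f n"
  unfolding contains_length3_inj_iff[OF inj] has231_def by (intro ex_cong1) auto

lemma contains_213_iff: "contains f n [2, 1, 3] \<longleftrightarrow> has213 f n"
  unfolding contains_length3_inj_iff[OF inj] has213_def by (intro ex_cong1) auto

lemma contains_312_iff: "contains f n [3, 1, 2] \<longleftrightarrow> has312 f n"
  unfolding contains_length3_inj_iff[OF inj] has312_def by (intro ex_cong1) auto

lemma contains_132_iff: "contains f n [1, 3, 2] \<longleftrightarrow> has132 f n"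
  unfolding contains_length3_inj_iff[OF inj] has132_def by (intro ex_cong1) auto

end

section \<open>Reverse-complement\<close>

definition reversal :: "nat \<Rightarrow> nat \<Rightarrow> nat" where
  "reversal n i = (if 1 \<le> i \<and> i \<le> n then n + 1 - i else i)"

definition reverse_complement :: "nat \<Rightarrow> (nat \<Rightarrow> nat) \<Rightarrow> nat \<Rightarrow> nat" where
  "reverse_complement n f = reversal n \<circ> f \<circ> reversal n"

lemma reversal_reversal [simp]: "reversal n (reversal n i) = i"
  by (auto simp: reversal_def)

lemma reversal_permutes: "reversal n permutes {1..n}"
  by (rule inj_imp_permutes) (auto simp: reversal_def inj_on_def)

lemma reverse_complement_reverse_complement [simp]:
  "reverse_complement n (reverse_complement n f) = f"
  by (simp add: reverse_complement_def fun_eq_iff)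

lemma reverse_complement_comp:
  "reverse_complement n f \<circ> reverse_complement n g = reverse_complement n (f \<circ> g)"
  by (simp add: reverse_complement_def fun_eq_iff)

lemma permutes_reverse_complement_iff:
  "reverse_complement n f permutes {1..n} \<longleftrightarrow> f permutes {1..n}"
proof -
  have "reverse_complement n g permutes {1..n}" if "g permutes {1..n}" for g
    unfolding reverse_complement_def using that by (intro permutes_compose reversal_permutes)
  then show ?thesis by (metis reverse_complement_reverse_complement)
qed

lemma reverse_complement_apply:
  assumes "f ` {1..n} \<subseteq> {1..n}" "i \<in> {1..n}"
  shows "reverse_complement n f i = n + 1 - f (n + 1 - i)"
proof -
  have "n + 1 - i \<in> {1..n}" using assms(2) by auto
  then have "f (n + 1 - i) \<in> {1..n}" using assms(1) by blast
  then show ?thesis using assms(2) by (simp add: reverse_complement_def reversal_def)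
qed

lemma ex_ordered_triple_reflect:
  fixes n :: nat
  shows "(\<exists>p q s. 1 \<le> p \<and> p < q \<and> q < s \<and> s \<le> n \<and> P p q s) \<longleftrightarrow>
    (\<exists>p q s. 1 \<le> p \<and> p < q \<and> q < s \<and> s \<le> n \<and> P (n + 1 - s) (n + 1 - q) (n + 1 - p))"
proof
  assume "\<exists>p q s. 1 \<le> p \<and> p < q \<and> q < s \<and> s \<le> n \<and> P p q s"
  then obtain p q s where "1 \<le> p" "p < q" "q < s" "s \<le> n" "P p q s" by blast
  then have "1 \<le> n + 1 - s \<and> n + 1 - s < n + 1 - q \<and> n + 1 - q < n + 1 - p \<and> n + 1 - p \<le> n \<and>
      P (n + 1 - (n + 1 - p)) (n + 1 - (n + 1 - q)) (n + 1 - (n + 1 - s))"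
    by auto
  then show "\<exists>p q s. 1 \<le> p \<and> p < q \<and> q < s \<and> s \<le> n \<and> P (n + 1 - s) (n + 1 - q) (n + 1 - p)"
    by blast
next
  assume "\<exists>p q s. 1 \<le> p \<and> p < q \<and> q < s \<and> s \<le> n \<and> P (n + 1 - s) (n + 1 - q) (n + 1 - p)"
  then obtain p q s where "1 \<le> p" "p < q" "q < s" "s \<le> n" "P (n + 1 - s) (n + 1 - q) (n + 1 - p)"
    by blast
  then have "1 \<le> n + 1 - s \<and> n + 1 - s < n + 1 - q \<and> n + 1 - q < n + 1 - p \<and> n + 1 - p \<le> n \<and>
      P (n + 1 - s) (n + 1 - q) (n + 1 - p)"
    by auto
  then show "\<exists>p q s. 1 \<le> p \<and> p < q \<and> q < s \<and> s \<le> n \<and> P p q s"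
    by blast
qed

context
  fixes f :: "nat \<Rightarrow> nat" and n :: nat
  assumes range: "f ` {1..n} \<subseteq> {1..n}"
begin

lemma reverse_complement_less_iff:
  assumes "i \<in> {1..n}" "j \<in> {1..n}"
  shows "reverse_complement n f i < reverse_complement n f j \<longleftrightarrow> f (n + 1 - j) < f (n + 1 - i)"
proof -
  have "n + 1 - i \<in> {1..n}" "n + 1 - j \<in> {1..n}" using assms by auto
  then have "f (n + 1 - i) \<in> {1..n}" "f (n + 1 - j) \<in> {1..n}" using range by blast+
  then show ?thesis using assms by (simp add: reverse_complement_apply[OF range]) linarith
qed

lemma has312_reverse_complement_iff: "has312 (reverse_complement n f) n \<longleftrightarrow> has231 f n"
proof -
  have "has312 (reverse_complement n f) n \<longleftrightarrow> (\<exists>p q s. 1 \<le> p \<and> p < q \<and> q < s \<and> s \<le> n \<and>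
      f (n + 1 - s) < f (n + 1 - q) \<and> f (n + 1 - p) < f (n + 1 - s))"
    unfolding has312_def
    by (intro ex_cong1 conj_cong refl) (simp_all add: reverse_complement_less_iff)
  also have "\<dots> \<longleftrightarrow> has231 f n"
    unfolding has231_def ex_ordered_triple_reflect[where P = "\<lambda>p q s. f s < f p \<and> f p < f q"]
    by (intro ex_cong1) blast
  finally show ?thesis .
qed

lemma has132_reverse_complement_iff: "has132 (reverse_complement n f) n \<longleftrightarrow> has213 f n"
proof -
  have "has132 (reverse_complement n f) n \<longleftrightarrow> (\<exists>p q s. 1 \<le> p \<and> p < q \<and> q < s \<and> s \<le> n \<and>
      f (n + 1 - s) < f (n + 1 - p) \<and> f (n + 1 - q) < f (n + 1 - s))"
    unfolding has132_def
    by (intro ex_cong1 conj_cong refl) (simp_all add: reverse_complement_less_iff)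
  also have "\<dots> \<longleftrightarrow> has213 f n"
    unfolding has213_def ex_ordered_triple_reflect[where P = "\<lambda>p q s. f q < f p \<and> f p < f s"]
    by (intro ex_cong1) blast
  finally show ?thesis .
qed

end

definition avoiders :: "nat \<Rightarrow> (nat \<Rightarrow> nat) set" where
  "avoiders n = {\<pi>. \<pi> permutes {1..n} \<and> \<not> has231 \<pi> n \<and> \<not> has213 \<pi> n \<and> \<not> has231 (\<pi> \<circ> \<pi>) n}"

lemma avoiders_permutes: "\<pi> \<in> avoiders n \<Longrightarrow> \<pi> permutes {1..n}"
  by (simp add: avoiders_def)

lemma avoiders_zero: "\<pi> \<in> avoiders n \<Longrightarrow> \<pi> 0 = 0"
  using permutes_not_in[of \<pi> "{1..n}" 0] by (simp add: avoiders_def)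

lemma finite_avoiders: "finite (avoiders n)"
  by (rule finite_subset[OF _ finite_permutations[of "{1..n}"]]) (auto simp: avoiders_def)

lemma c_231_213_231_eq_card: "c n [2, 3, 1] [2, 1, 3] [2, 3, 1] = card (avoiders n)"
proof -
  have "\<pi> permutes {1..n} \<and> avoids \<pi> n [2, 3, 1] \<and> avoids \<pi> n [2, 1, 3] \<and>
      avoids (\<pi> \<circ> \<pi>) n [2, 3, 1] \<longleftrightarrow> \<pi> \<in> avoiders n" for \<pi>
  proof (cases "\<pi> permutes {1..n}")
    case True
    then have inj: "inj_on \<pi> {1..n}" "inj_on (\<pi> \<circ> \<pi>) {1..n}"
      by (auto intro: permutes_inj_on permutes_compose)
    show ?thesis
      unfolding avoids_def avoiders_def mem_Collect_eq
      using True contains_231_iff[OF inj(1)] contains_213_iff[OF inj(1)] contains_231_iff[OF inj(2)]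
      by blast
  qed (simp add: avoiders_def)
  then show ?thesis unfolding c_def by (simp only: Collect_mem_eq)
qed

lemma c_312_132_312_eq_card: "c n [3, 1, 2] [1, 3, 2] [3, 1, 2] = card (avoiders n)"
proof -
  let ?rc = "reverse_complement n"
  have "\<sigma> permutes {1..n} \<and> avoids \<sigma> n [3, 1, 2] \<and> avoids \<sigma> n [1, 3, 2] \<and>
      avoids (\<sigma> \<circ> \<sigma>) n [3, 1, 2] \<longleftrightarrow> ?rc \<sigma> \<in> avoiders n" for \<sigma>
  proof (cases "\<sigma> permutes {1..n}")
    case True
    then have perm: "?rc \<sigma> permutes {1..n}" "?rc (\<sigma> \<circ> \<sigma>) permutes {1..n}"
      using permutes_compose[OF True True] permutes_reverse_complement_iff by blast+
    then have "?rc \<sigma> ` {1..n} \<subseteq> {1..n}" "?rc (\<sigma> \<circ> \<sigma>) ` {1..n} \<subseteq> {1..n}"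
      by (simp_all add: permutes_image)
    from this[THEN has312_reverse_complement_iff] this(1)[THEN has132_reverse_complement_iff]
    have has: "has312 \<sigma> n \<longleftrightarrow> has231 (?rc \<sigma>) n" "has132 \<sigma> n \<longleftrightarrow> has213 (?rc \<sigma>) n"
      "has312 (\<sigma> \<circ> \<sigma>) n \<longleftrightarrow> has231 (?rc \<sigma> \<circ> ?rc \<sigma>) n"
      by (simp_all add: reverse_complement_comp)
    have inj: "inj_on \<sigma> {1..n}" "inj_on (\<sigma> \<circ> \<sigma>) {1..n}"
      using True by (auto intro: permutes_inj_on permutes_compose)
    show ?thesis
      unfolding avoids_def avoiders_def mem_Collect_eq
      using True perm(1) has contains_312_iff[OF inj(1)] contains_132_iff[OF inj(1)]
        contains_312_iff[OF inj(2)]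
      by blast
  next
    case False
    then show ?thesis
      unfolding avoiders_def using permutes_reverse_complement_iff by blast
  qed
  then have "{\<sigma>. \<sigma> permutes {1..n} \<and> avoids \<sigma> n [3, 1, 2] \<and> avoids \<sigma> n [1, 3, 2] \<and>
      avoids (\<sigma> \<circ> \<sigma>) n [3, 1, 2]} = ?rc -` avoiders n"
    unfolding vimage_def by (simp only:)
  moreover have "bij ?rc" by (rule involuntory_imp_bij) simp
  ultimately show ?thesis
    unfolding c_def by (simp add: card_vimage_inj bij_is_inj bij_is_surj)
qed

lemma no_later_straddle:
  assumes "\<not> has231 f n" "\<not> has213 f n" "1 \<le> p" "p < q" "p < s" "q \<le> n" "s \<le> n"
  shows "\<not> (f q < f p \<and> f p < f s)"
proof
  assume "f q < f p \<and> f p < f s"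
  moreover have "q \<noteq> s" using calculation by auto
  ultimately have "has213 f n \<or> has231 f n"
    unfolding has213_def has231_def using assms(3-) by (metis linorder_neqE_nat)
  then show False using assms(1,2) by blast
qed

lemma avoiders_first_value:
  assumes "\<pi> \<in> avoiders n" "1 \<le> n"
  shows "\<pi> 1 = 1 \<or> \<pi> 1 = n"
proof (rule ccontr)
  assume not_extreme: "\<not> (\<pi> 1 = 1 \<or> \<pi> 1 = n)"
  have perm: "\<pi> permutes {1..n}" and "\<not> has231 \<pi> n" "\<not> has213 \<pi> n"
    using assms(1) by (auto simp: avoiders_def)
  have "1 \<in> \<pi> ` {1..n}" "n \<in> \<pi> ` {1..n}" "\<pi> 1 \<in> {1..n}"
    using assms(2) permutes_image[OF perm] by auto
  then obtain q s where "q \<in> {1..n}" "\<pi> q = 1" "s \<in> {1..n}" "\<pi> s = n" "\<pi> 1 \<in> {1..n}"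
    by auto
  with not_extreme show False
    using no_later_straddle[OF \<open>\<not> has231 \<pi> n\<close> \<open>\<not> has213 \<pi> n\<close>, of 1 q s] by force
qed

section \<open>Permutations starting with 1\<close>

(* The direct sum 1 (+) sigma.  It fixes 1 only if sigma 0 = 0, which holds for every
   permutation of {1..m}. *)
definition one_oplus :: "(nat \<Rightarrow> nat) \<Rightarrow> nat \<Rightarrow> nat" where
  "one_oplus \<sigma> i = (case i of 0 \<Rightarrow> 0 | Suc j \<Rightarrow> Suc (\<sigma> j))"

lemma one_oplus_comp: "one_oplus \<sigma> \<circ> one_oplus \<tau> = one_oplus (\<sigma> \<circ> \<tau>)"
  by (simp add: fun_eq_iff one_oplus_def split: nat.split)

lemma permutes_one_oplus_iff:
  assumes "\<sigma> 0 = 0"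
  shows "one_oplus \<sigma> permutes {1..Suc m} \<longleftrightarrow> \<sigma> permutes {1..m}"
proof
  assume perm: "one_oplus \<sigma> permutes {1..Suc m}"
  show "\<sigma> permutes {1..m}"
  proof (rule inj_imp_permutes)
    show "inj_on \<sigma> {1..m}"
    proof (rule inj_onI)
      fix x y
      assume "\<sigma> x = \<sigma> y"
      then have "one_oplus \<sigma> (Suc x) = one_oplus \<sigma> (Suc y)" by (simp add: one_oplus_def)
      then show "x = y" using permutes_inj[OF perm] by (simp add: inj_eq)
    qed
    show "\<sigma> i \<in> {1..m}" if "i \<in> {1..m}" for i
    proof -
      have "one_oplus \<sigma> (Suc i) \<noteq> one_oplus \<sigma> (Suc 0)"
        using that permutes_inj[OF perm] by (auto simp: inj_eq)
      then show ?thesis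
        using permutes_in_image[OF perm, of "Suc i"] that assms by (auto simp: one_oplus_def)
    qed
    show "\<sigma> i = i" if "i \<notin> {1..m}" for i
      using permutes_not_in[OF perm, of "Suc i"] that assms by (cases i) (auto simp: one_oplus_def)
  qed simp
next
  assume perm: "\<sigma> permutes {1..m}"
  show "one_oplus \<sigma> permutes {1..Suc m}"
  proof (rule inj_imp_permutes)
    show "inj_on (one_oplus \<sigma>) {1..Suc m}"
    proof (rule inj_onI)
      fix x y
      assume "x \<in> {1..Suc m}" "y \<in> {1..Suc m}" "one_oplus \<sigma> x = one_oplus \<sigma> y"
      then obtain i j where "x = Suc i" "y = Suc j" "\<sigma> i = \<sigma> j"
        by (cases x; cases y) (auto simp: one_oplus_def)
      then show "x = y" using permutes_inj[OF perm] by (simp add: inj_eq)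
    qed
    show "one_oplus \<sigma> i \<in> {1..Suc m}" if "i \<in> {1..Suc m}" for i
      using permutes_in_image[OF perm, of "i - 1"] that assms
      by (cases i) (auto simp: one_oplus_def Suc_le_eq)
    show "one_oplus \<sigma> i = i" if "i \<notin> {1..Suc m}" for i
      using permutes_not_in[OF perm, of "i - 1"] that by (cases i) (auto simp: one_oplus_def)
  qed simp
qed

lemma ex_ordered_triple_Suc:
  "(\<exists>p q s. 1 \<le> p \<and> p < q \<and> q < s \<and> s \<le> Suc m \<and> P p q s) \<longleftrightarrow>
    (\<exists>p q s. p < q \<and> q < s \<and> s \<le> m \<and> P (Suc p) (Suc q) (Suc s))"
proof
  assume "\<exists>p q s. 1 \<le> p \<and> p < q \<and> q < s \<and> s \<le> Suc m \<and> P p q s"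
  then obtain p q s where "1 \<le> p" "p < q" "q < s" "s \<le> Suc m" "P p q s" by blast
  then have "p - 1 < q - 1 \<and> q - 1 < s - 1 \<and> s - 1 \<le> m"
    "P (Suc (p - 1)) (Suc (q - 1)) (Suc (s - 1))"
    by auto
  then show "\<exists>p q s. p < q \<and> q < s \<and> s \<le> m \<and> P (Suc p) (Suc q) (Suc s)" by blast
next
  assume "\<exists>p q s. p < q \<and> q < s \<and> s \<le> m \<and> P (Suc p) (Suc q) (Suc s)"
  then obtain p q s where "p < q" "q < s" "s \<le> m" "P (Suc p) (Suc q) (Suc s)" by blast
  then have "1 \<le> Suc p \<and> Suc p < Suc q \<and> Suc q < Suc s \<and> Suc s \<le> Suc m \<and>
      P (Suc p) (Suc q) (Suc s)"
    by simp
  then show "\<exists>p q s. 1 \<le> p \<and> p < q \<and> q < s \<and> s \<le> Suc m \<and> P p q s" by blast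
qed

context
  fixes \<sigma> :: "nat \<Rightarrow> nat" and m :: nat
  assumes zero: "\<sigma> 0 = 0"
begin

lemma pos_if_above: "\<sigma> s < \<sigma> p \<Longrightarrow> 1 \<le> p"
  using zero by (cases p) auto

lemma has231_one_oplus_iff: "has231 (one_oplus \<sigma>) (Suc m) \<longleftrightarrow> has231 \<sigma> m"
proof -
  have "has231 (one_oplus \<sigma>) (Suc m) \<longleftrightarrow>
      (\<exists>p q s. p < q \<and> q < s \<and> s \<le> m \<and> \<sigma> s < \<sigma> p \<and> \<sigma> p < \<sigma> q)"
    unfolding has231_def ex_ordered_triple_Suc by (simp add: one_oplus_def)
  also have "\<dots> \<longleftrightarrow> has231 \<sigma> m"
    unfolding has231_def by (intro ex_cong1) (use pos_if_above in blast)
  finally show ?thesis .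
qed

lemma has213_one_oplus_iff: "has213 (one_oplus \<sigma>) (Suc m) \<longleftrightarrow> has213 \<sigma> m"
proof -
  have "has213 (one_oplus \<sigma>) (Suc m) \<longleftrightarrow>
      (\<exists>p q s. p < q \<and> q < s \<and> s \<le> m \<and> \<sigma> q < \<sigma> p \<and> \<sigma> p < \<sigma> s)"
    unfolding has213_def ex_ordered_triple_Suc by (simp add: one_oplus_def)
  also have "\<dots> \<longleftrightarrow> has213 \<sigma> m"
    unfolding has213_def by (intro ex_cong1) (use pos_if_above in blast)
  finally show ?thesis .
qed

end

lemma one_oplus_in_avoiders_iff:
  assumes "\<sigma> 0 = 0"
  shows "one_oplus \<sigma> \<in> avoiders (Suc m) \<longleftrightarrow> \<sigma> \<in> avoiders m"
proof -
  have "(\<sigma> \<circ> \<sigma>) 0 = 0" using assms by simp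
  then show ?thesis
    unfolding avoiders_def mem_Collect_eq one_oplus_comp
    using permutes_one_oplus_iff[of \<sigma> m, OF assms] has231_one_oplus_iff[of \<sigma> m, OF assms]
      has213_one_oplus_iff[of \<sigma> m, OF assms] has231_one_oplus_iff[of "\<sigma> \<circ> \<sigma>" m]
    by blast
qed

lemma card_avoiders_first_1: "card {\<pi> \<in> avoiders (Suc m). \<pi> 1 = 1} = card (avoiders m)"
proof -
  define drop_first :: "(nat \<Rightarrow> nat) \<Rightarrow> nat \<Rightarrow> nat" where "drop_first \<pi> j = \<pi> (Suc j) - 1" for \<pi> j
  have "bij_betw one_oplus (avoiders m) {\<pi> \<in> avoiders (Suc m). \<pi> 1 = 1}"
  proof (rule bij_betw_byWitness[where f' = drop_first])
    show "\<forall>\<sigma> \<in> avoiders m. drop_first (one_oplus \<sigma>) = \<sigma>"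
      by (simp add: drop_first_def one_oplus_def fun_eq_iff)
    have "one_oplus (drop_first \<pi>) = \<pi>" "drop_first \<pi> 0 = 0"
      if "\<pi> \<in> avoiders (Suc m)" "\<pi> 1 = 1" for \<pi>
    proof -
      have "\<pi> (Suc j) \<noteq> \<pi> 0" for j
        using permutes_inj[OF avoiders_permutes[OF that(1)]] by (simp add: inj_eq)
      then show "one_oplus (drop_first \<pi>) = \<pi>"
        using avoiders_zero[OF that(1)]
        by (auto simp: fun_eq_iff one_oplus_def drop_first_def split: nat.split)
      show "drop_first \<pi> 0 = 0" using that(2) by (simp add: drop_first_def)
    qed
    then show "\<forall>\<pi> \<in> {\<pi> \<in> avoiders (Suc m). \<pi> 1 = 1}. one_oplus (drop_first \<pi>) = \<pi>"
      and "drop_first ` {\<pi> \<in> avoiders (Suc m). \<pi> 1 = 1} \<subseteq> avoiders m"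
      by (auto simp flip: one_oplus_in_avoiders_iff)
    show "one_oplus ` avoiders m \<subseteq> {\<pi> \<in> avoiders (Suc m). \<pi> 1 = 1}"
      using avoiders_zero one_oplus_in_avoiders_iff by (auto simp: one_oplus_def)
  qed
  then show ?thesis by (simp add: bij_betw_same_card)
qed

section \<open>Permutations starting with n\<close>

lemma strict_mono_on_interval_shift:
  fixes f :: "nat \<Rightarrow> nat"
  assumes mono: "strict_mono_on {a..b} f" and range: "f ` {a..b} \<subseteq> {d..d + (b - a)}"
    and i: "i \<in> {a..b}"
  shows "f i = d + (i - a)"
proof -
  have inj: "inj_on f A" if "A \<subseteq> {a..b}" for A
    using strict_mono_on_imp_inj_on[OF mono] that by (rule inj_on_subset)
  have bounds: "d \<le> f x" "f x \<le> d + (b - a)" if "x \<in> {a..b}" for x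
    using subsetD[OF range imageI[OF that]] by simp_all
  have "f ` {a..i} \<subseteq> {d..f i}"
    using bounds(1) strict_mono_on_leD[OF mono _ i] i by (intro image_subsetI) auto
  from card_inj_on_le[OF inj this] have "i - a \<le> f i - d"
    using i bounds(1)[OF i] by simp
  moreover have "f ` {i..b} \<subseteq> {f i..d + (b - a)}"
    using bounds(2) strict_mono_on_leD[OF mono i] i by (intro image_subsetI) auto
  from card_inj_on_le[OF inj this] have "b - i \<le> d + (b - a) - f i"
    using i by simp
  ultimately show ?thesis using i bounds[OF i] by simp
qed

(* In one-line notation: (b+r) (b+r-1) ... (r+1) 1 2 ... r. *)
definition dec_inc :: "nat \<Rightarrow> nat \<Rightarrow> nat \<Rightarrow> nat" where
  "dec_inc b r i =
     (if 1 \<le> i \<and> i \<le> b then b + r + 1 - i else if b < i \<and> i \<le> b + r then i - b else i)"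

context
  fixes b r :: nat
  assumes r: "1 \<le> r" "r \<le> b"
begin

lemma dec_inc_first: "dec_inc b r 1 = b + r"
  using r by (simp add: dec_inc_def)

lemma dec_inc_last: "dec_inc b r (b + r) = r"
  using r by (simp add: dec_inc_def)

lemma dec_inc_permutes: "dec_inc b r permutes {1..b + r}"
proof (rule inj_imp_permutes)
  show "inj_on (dec_inc b r) {1..b + r}"
    by (rule inj_onI) (auto simp: dec_inc_def split: if_splits)
qed (auto simp: dec_inc_def)

lemma dec_inc_square:
  "(dec_inc b r \<circ> dec_inc b r) i =
     (if 1 \<le> i \<and> i \<le> r then r + 1 - i else if r < i \<and> i \<le> b then i
      else if b < i \<and> i \<le> b + r then 2 * b + r + 1 - i else i)"
  using r by (auto simp: dec_inc_def)

lemma dec_inc_in_avoiders: "dec_inc b r \<in> avoiders (b + r)"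
proof -
  have "\<not> has231 (dec_inc b r) (b + r)" "\<not> has213 (dec_inc b r) (b + r)"
    unfolding has231_def has213_def by (auto simp: dec_inc_def split: if_splits)
  moreover have "\<not> has231 (dec_inc b r \<circ> dec_inc b r) (b + r)"
    unfolding has231_def dec_inc_square using r by (auto split: if_splits)
  ultimately show ?thesis
    using dec_inc_permutes by (simp add: avoiders_def)
qed

end

locale descending_prefix =
  fixes \<pi> :: "nat \<Rightarrow> nat" and n b :: nat
  assumes avoider: "\<pi> \<in> avoiders n"
    and prefix: "\<And>i. 1 \<le> i \<Longrightarrow> i \<le> b \<Longrightarrow> \<pi> i = n + 1 - i"
    and bounds: "1 \<le> b" "b < n"
begin

lemma tail_values:
  assumes "b < i" "i \<le> n"
  shows "\<pi> i \<in> {1..n - b}"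
proof -
  note perm = avoiders_permutes[OF avoider]
  have "\<pi> i \<in> {1..n}" using permutes_in_image[OF perm] assms by simp
  moreover have "\<not> n - b < \<pi> i"
  proof
    assume "n - b < \<pi> i"
    with \<open>\<pi> i \<in> {1..n}\<close> have "1 \<le> n + 1 - \<pi> i" "n + 1 - \<pi> i \<le> b" by auto
    then have "\<pi> (n + 1 - \<pi> i) = \<pi> i" using prefix \<open>\<pi> i \<in> {1..n}\<close> by simp
    then have "n + 1 - \<pi> i = i" using permutes_inj[OF perm] by (simp add: inj_eq)
    with \<open>n + 1 - \<pi> i \<le> b\<close> \<open>b < i\<close> show False by simp
  qed
  ultimately show ?thesis by simp
qed

lemma tail_values_attained:
  assumes "v \<in> {1..n - b}"
  obtains i where "b < i" "i \<le> n" "\<pi> i = v"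
proof -
  have "v \<in> \<pi> ` {1..n}" using permutes_image[OF avoiders_permutes[OF avoider]] assms by auto
  then obtain i where i: "i \<in> {1..n}" "\<pi> i = v" by blast
  have "b < i"
  proof (rule ccontr)
    assume "\<not> b < i"
    then have "\<pi> i = n + 1 - i" using prefix i by simp
    moreover have "1 \<le> i" "v \<le> n - b" using i assms by auto
    ultimately show False using \<open>\<pi> i = v\<close> \<open>\<not> b < i\<close> bounds by linarith
  qed
  with i that show ?thesis by simp
qed

lemma next_value_eq_1:
  assumes "\<pi> (Suc b) \<noteq> n - b"
  shows "\<pi> (Suc b) = 1"
proof (rule ccontr)
  assume "\<pi> (Suc b) \<noteq> 1"
  with assms tail_values[of "Suc b"] bounds have between: "1 < \<pi> (Suc b)" "\<pi> (Suc b) < n - b"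
    by auto
  obtain q where q: "b < q" "q \<le> n" "\<pi> q = 1"
    by (rule tail_values_attained[of 1]) (use bounds in auto)
  obtain s where s: "b < s" "s \<le> n" "\<pi> s = n - b"
    by (rule tail_values_attained[of "n - b"]) (use bounds in auto)
  have "q \<noteq> Suc b" "s \<noteq> Suc b" using q s between by auto
  then show False
    using no_later_straddle[of \<pi> n "Suc b" q s] avoider between q s bounds
    by (auto simp: avoiders_def)
qed

end

locale descending_prefix_then_1 = descending_prefix +
  assumes next_1: "\<pi> (Suc b) = 1"
begin

lemma tail_le_prefix: "n - b \<le> b"
proof (rule ccontr)
  assume "\<not> n - b \<le> b"
  then have "Suc b \<in> {1..n - b}" by simp
  then obtain z where z: "b < z" "z \<le> n" "\<pi> z = Suc b"
    by (rule tail_values_attained)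
  have "z \<noteq> Suc b" using z next_1 bounds by auto
  with z have "Suc b < z" by simp
  have "\<pi> n \<noteq> \<pi> (Suc b)"
    using permutes_inj[OF avoiders_permutes[OF avoider]] \<open>Suc b < z\<close> z(2) by (auto simp: inj_eq)
  then have "\<pi> n \<noteq> 1" using next_1 by simp
  with tail_values[of n] bounds have "1 < \<pi> n" "\<pi> n < n" by auto
  moreover have "(\<pi> \<circ> \<pi>) 1 = \<pi> n" "(\<pi> \<circ> \<pi>) (Suc b) = n" "(\<pi> \<circ> \<pi>) z = 1"
    using prefix[of 1] bounds next_1 z by auto
  ultimately have "has231 (\<pi> \<circ> \<pi>) n"
    using bounds \<open>Suc b < z\<close> z(2) by (intro has231I[of 1 "Suc b" z]) simp_all
  then show False using avoider by (simp add: avoiders_def)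
qed

lemma tail_strict_mono: "strict_mono_on {Suc b..n} \<pi>"
proof (rule strict_mono_onI)
  fix q s
  assume qs: "q \<in> {Suc b..n}" "s \<in> {Suc b..n}" "q < s"
  have "\<pi> q \<noteq> \<pi> s" "\<pi> s \<noteq> \<pi> (Suc b)"
    using permutes_inj[OF avoiders_permutes[OF avoider]] qs by (auto simp: inj_eq)
  then have "\<pi> s \<noteq> 1" using next_1 by simp
  show "\<pi> q < \<pi> s"
  proof (cases "q = Suc b")
    case True
    with \<open>\<pi> s \<noteq> 1\<close> next_1 show ?thesis using tail_values[of s] qs by auto
  next
    case False
    show ?thesis
    proof (rule ccontr)
      assume "\<not> \<pi> q < \<pi> s"
      with \<open>\<pi> q \<noteq> \<pi> s\<close> \<open>\<pi> s \<noteq> 1\<close> tail_values[of s] qs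
      have "1 < \<pi> s" "\<pi> s < \<pi> q" by auto
      (* the prefix sends n + 1 - j to j, so pi^2 reads the tail backwards *)
      have square: "\<pi> (\<pi> (n + 1 - j)) = \<pi> j" if "j \<in> {Suc b..n}" for j
        using prefix[of "n + 1 - j"] tail_le_prefix that by auto
      have "(\<pi> \<circ> \<pi>) (n + 1 - s) = \<pi> s" "(\<pi> \<circ> \<pi>) (n + 1 - q) = \<pi> q" "(\<pi> \<circ> \<pi>) (n - b) = 1"
        using square[of s] square[of q] square[of "Suc b"] qs bounds next_1
        by (auto simp: Suc_diff_le)
      moreover have "1 \<le> n + 1 - s" "n + 1 - s < n + 1 - q" "n + 1 - q < n - b" "n - b \<le> n"
        using qs False by auto
      ultimately have "has231 (\<pi> \<circ> \<pi>) n"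
        using \<open>1 < \<pi> s\<close> \<open>\<pi> s < \<pi> q\<close>
        by (intro has231I[of "n + 1 - s" "n + 1 - q" "n - b"]) simp_all
      then show False using avoider by (simp add: avoiders_def)
    qed
  qed
qed

lemma eq_dec_inc: "\<pi> = dec_inc b (n - b)"
proof
  fix i
  have "\<pi> ` {Suc b..n} \<subseteq> {1..1 + (n - Suc b)}"
    using tail_values bounds by (auto simp: Suc_diff_Suc)
  from strict_mono_on_interval_shift[OF tail_strict_mono this]
  have tail: "\<pi> i = i - b" if "b < i" "i \<le> n"
    using that by simp
  show "\<pi> i = dec_inc b (n - b) i"
    using prefix[of i] tail permutes_not_in[OF avoiders_permutes[OF avoider], of i] bounds
    by (auto simp: dec_inc_def)
qed

end

lemma avoiders_first_max_descending_prefix: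
  assumes avoider: "\<pi> \<in> avoiders n" and "2 \<le> n" and first: "\<pi> 1 = n"
  obtains b where "descending_prefix_then_1 \<pi> n b"
proof (cases "\<exists>k. 1 \<le> k \<and> k \<le> n \<and> \<pi> k \<noteq> n + 1 - k")
  case True
  then obtain k0 where "1 \<le> k0 \<and> k0 \<le> n \<and> \<pi> k0 \<noteq> n + 1 - k0" by blast
  from ex_least_nat_less[of "\<lambda>i. 1 \<le> i \<and> i \<le> n \<and> \<pi> i \<noteq> n + 1 - i", OF this]
  obtain k where before: "\<forall>i \<le> k. \<not> (1 \<le> i \<and> i \<le> n \<and> \<pi> i \<noteq> n + 1 - i)"
    and at: "1 \<le> Suc k \<and> Suc k \<le> n \<and> \<pi> (Suc k) \<noteq> n + 1 - Suc k"
    by auto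
  have "k \<noteq> 0"
  proof
    assume "k = 0"
    with at first show False by simp
  qed
  with before at have "descending_prefix \<pi> n k"
    by unfold_locales (use avoider in auto)
  then have "\<pi> (Suc k) = 1"
    by (rule descending_prefix.next_value_eq_1) (use at in simp)
  with \<open>descending_prefix \<pi> n k\<close> show ?thesis
    by (intro that[of k] descending_prefix_then_1.intro descending_prefix_then_1_axioms.intro)
next
  case False
  then have "descending_prefix \<pi> n (n - 1)" "\<pi> (Suc (n - 1)) = 1"
    using avoider \<open>2 \<le> n\<close> by (unfold_locales, auto)
  then show ?thesis
    by (intro that[of "n - 1"] descending_prefix_then_1.intro descending_prefix_then_1_axioms.intro)
qed

lemma avoiders_first_max:
  assumes "\<pi> \<in> avoiders n" and "2 \<le> n" and "\<pi> 1 = n"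
  obtains r where "r \<in> {1..n div 2}" "\<pi> = dec_inc (n - r) r"
proof -
  obtain b where "descending_prefix_then_1 \<pi> n b"
    using avoiders_first_max_descending_prefix[OF assms] by blast
  then interpret descending_prefix_then_1 \<pi> n b .
  have "n - b \<in> {1..n div 2}" using tail_le_prefix bounds by simp presburger
  moreover have "\<pi> = dec_inc (n - (n - b)) (n - b)" using eq_dec_inc bounds by simp
  ultimately show ?thesis by (rule that)
qed

lemma card_avoiders_first_max:
  assumes "2 \<le> n"
  shows "card {\<pi> \<in> avoiders n. \<pi> 1 = n} = n div 2"
proof -
  have dec_inc: "dec_inc (n - r) r \<in> avoiders n" "dec_inc (n - r) r 1 = n" "dec_inc (n - r) r n = r"
    if "r \<in> {1..n div 2}" for r
  proof -
    have "1 \<le> r" "r \<le> n - r" "n - r + r = n" using that by auto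
    then show "dec_inc (n - r) r \<in> avoiders n" "dec_inc (n - r) r 1 = n" "dec_inc (n - r) r n = r"
      using dec_inc_in_avoiders dec_inc_first dec_inc_last by metis+
  qed
  have "bij_betw (\<lambda>r. dec_inc (n - r) r) {1..n div 2} {\<pi> \<in> avoiders n. \<pi> 1 = n}"
  proof (rule bij_betw_imageI)
    show "inj_on (\<lambda>r. dec_inc (n - r) r) {1..n div 2}"
    proof (rule inj_onI)
      fix r r'
      assume "r \<in> {1..n div 2}" "r' \<in> {1..n div 2}" "dec_inc (n - r) r = dec_inc (n - r') r'"
      then show "r = r'" using dec_inc(3) by metis
    qed
    show "(\<lambda>r. dec_inc (n - r) r) ` {1..n div 2} = {\<pi> \<in> avoiders n. \<pi> 1 = n}"
      using dec_inc(1,2) avoiders_first_max[OF _ assms] by blast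
  qed
  from bij_betw_same_card[OF this] show ?thesis by simp
qed

lemma card_avoiders_Suc:
  assumes "1 \<le> m"
  shows "card (avoiders (Suc m)) = card (avoiders m) + Suc m div 2"
proof -
  let ?first_min = "{\<pi> \<in> avoiders (Suc m). \<pi> 1 = 1}"
  let ?first_max = "{\<pi> \<in> avoiders (Suc m). \<pi> 1 = Suc m}"
  have "\<pi> 1 = 1 \<or> \<pi> 1 = Suc m" if "\<pi> \<in> avoiders (Suc m)" for \<pi>
    using avoiders_first_value[OF that] by simp
  then have "avoiders (Suc m) = ?first_min \<union> ?first_max" by blast
  moreover have "card (?first_min \<union> ?first_max) = card ?first_min + card ?first_max"
    using assms finite_avoiders[of "Suc m"] by (intro card_Un_disjoint) auto
  ultimately show ?thesis
    using card_avoiders_first_1[of m] card_avoiders_first_max[of "Suc m"] assms by simp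
qed

lemma avoiders_1: "avoiders 1 = {id}"
proof -
  have "\<not> has231 id 1" "\<not> has213 id 1"
    unfolding has231_def has213_def by auto
  then show ?thesis
    by (auto simp: avoiders_def permutes_sing)
qed

lemma card_avoiders:
  assumes "1 \<le> n"
  shows "card (avoiders n) = (if even n then (n div 2)^2 + 1 else (n div 2)^2 + n div 2 + 1)"
  using assms
proof (induction n rule: nat_induct_at_least)
  case base
  show ?case using avoiders_1 by simp
next
  case (Suc m)
  note step = card_avoiders_Suc[OF Suc.hyps]
  show ?case
  proof (cases "even m")
    case True
    then obtain k where "m = 2 * k" by blast
    then have "m div 2 = k" "Suc m div 2 = k" "odd (Suc m)" by auto
    with Suc.IH step \<open>even m\<close> show ?thesis by simp
  next
    case False
    then obtain k where "m = 2 * k + 1" by (rule oddE)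
    then have "m div 2 = k" "Suc m div 2 = k + 1" "even (Suc m)" by auto
    with Suc.IH step \<open>odd m\<close> show ?thesis by (simp add: power2_eq_square)
  qed
qed

theorem theorem3p5:
  fixes n :: nat
  assumes "n \<ge> 1"
  shows "c n [2,3,1] [2,1,3] [2,3,1] = c n [3,1,2] [1,3,2] [3,1,2] \<and>
         c n [2,3,1] [2,1,3] [2,3,1] =
           (if even n then (n div 2)^2 + 1 else (n div 2)^2 + n div 2 + 1)"
  using c_231_213_231_eq_card c_312_132_312_eq_card card_avoiders[OF assms] by simp

end
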